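(* Every monotone clause elimination procedure is MUS-preserving: if $\mathsf{E}$ is a monotone clause elimination procedure, then $\mathsf{MUS}(\mathsf{E}(F)) = \mathsf{MUS}(F)$ for every CNF formula $F$.
   Context: A CNF formula is a finite set of clauses (finite sets of literals). A clause elimination procedure $\mathsf{E}$ maps every CNF formula $F$ to a formula $\mathsf{E}(F) \subseteq F$ that is equisatisfiable with $F$. $\mathsf{E}$ is monotone if $F' \subseteq F$ implies $\mathsf{E}(F') \subseteq \mathsf{E}(F)$. For a CNF formula $F$, $\mathsf{MUS}(F)$ denotes the set of minimal unsatisfiable subsets of $F$ (unsatisfiable $M \subseteq F$ all of whose proper subsets are satisfiable). *)

theory Defs
  imports Main
begin

datatype 'v literal = Pos 'v | Neg 'v

type_synonym 'v clause = "'v literal set"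
type_synonym 'v cnf = "'v clause set"

definition is_cnf :: "'v cnf \<Rightarrow> bool" where
  "is_cnf F \<longleftrightarrow> finite F \<and> (\<forall>C\<in>F. finite C)"

fun lit_sat :: "('v \<Rightarrow> bool) \<Rightarrow> 'v literal \<Rightarrow> bool" where
  "lit_sat \<alpha> (Pos x) = \<alpha> x"
| "lit_sat \<alpha> (Neg x) = (\<not> \<alpha> x)"

definition clause_sat :: "('v \<Rightarrow> bool) \<Rightarrow> 'v clause \<Rightarrow> bool" where
  "clause_sat \<alpha> C \<longleftrightarrow> (\<exists>l\<in>C. lit_sat \<alpha> l)"

definition satisfiable :: "'v cnf \<Rightarrow> bool" where
  "satisfiable F \<longleftrightarrow> (\<exists>\<alpha>. \<forall>C\<in>F. clause_sat \<alpha> C)"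

definition equisatisfiable :: "'v cnf \<Rightarrow> 'v cnf \<Rightarrow> bool" where
  "equisatisfiable F G \<longleftrightarrow> (satisfiable F \<longleftrightarrow> satisfiable G)"

definition clause_elimination :: "('v cnf \<Rightarrow> 'v cnf) \<Rightarrow> bool" where
  "clause_elimination E \<longleftrightarrow>
     (\<forall>F. is_cnf F \<longrightarrow> E F \<subseteq> F \<and> equisatisfiable (E F) F)"

definition monotone_ce :: "('v cnf \<Rightarrow> 'v cnf) \<Rightarrow> bool" where
  "monotone_ce E \<longleftrightarrow>
     (\<forall>F F'. is_cnf F \<longrightarrow> F' \<subseteq> F \<longrightarrow> E F' \<subseteq> E F)"

definition MUS :: "'v cnf \<Rightarrow> 'v cnf set" where
  "MUS F = {M. M \<subseteq> F \<and> \<not> satisfiable M \<and> (\<forall>M'. M' \<subset> M \<longrightarrow> satisfiable M')}"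

end

theory Submission
  imports Defs
begin

text \<open>A minimal unsatisfiable formula M is fixed by any clause elimination procedure, since
  E(M) is an unsatisfiable subset of M. By monotonicity, M \<subseteq> F then gives M = E(M) \<subseteq> E(F),
  so every MUS of F survives the elimination; the converse inclusion holds because E(F) \<subseteq> F.\<close>

lemma is_cnf_subset: "is_cnf F \<Longrightarrow> G \<subseteq> F \<Longrightarrow> is_cnf G"
  unfolding is_cnf_def by (meson finite_subset subsetD)

lemma MUS_mono: "G \<subseteq> F \<Longrightarrow> MUS G \<subseteq> MUS F"
  unfolding MUS_def by blast

lemma MUS_iff_self_member: "M \<in> MUS F \<longleftrightarrow> M \<subseteq> F \<and> M \<in> MUS M"
  unfolding MUS_def by blast

lemma clause_elimination_fixes_MUS:
  assumes "clause_elimination E" and "is_cnf M" and "M \<in> MUS M"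
  shows "E M = M"
proof -
  have "E M \<subseteq> M" and "equisatisfiable (E M) M"
    using assms(1,2) unfolding clause_elimination_def by auto
  with assms(3) show ?thesis
    unfolding MUS_def equisatisfiable_def by blast
qed

theorem proposition1:
  fixes E :: "'v cnf \<Rightarrow> 'v cnf"
  assumes "clause_elimination E"
    and "monotone_ce E"
    and "is_cnf F"
  shows "MUS (E F) = MUS F"
proof
  show "MUS (E F) \<subseteq> MUS F"
    using assms(1,3) MUS_mono unfolding clause_elimination_def by blast
  show "MUS F \<subseteq> MUS (E F)"
  proof
    fix M assume "M \<in> MUS F"
    then have "M \<subseteq> F" and "M \<in> MUS M" using MUS_iff_self_member by blast+
    then have "E M = M"
      using clause_elimination_fixes_MUS assms(1,3) is_cnf_subset by blast
    moreover have "E M \<subseteq> E F"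
      using assms(2,3) \<open>M \<subseteq> F\<close> unfolding monotone_ce_def by blast
    ultimately show "M \<in> MUS (E F)"
      using \<open>M \<in> MUS M\<close> MUS_iff_self_member by blast
  qed
qed

end
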